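(* In the fixed-volume $\alpha$-cap process described in the context (with $|A_0|=\alpha$), there is $R>0$ such that $A_1\subseteq B(0,R)$.
   Context: $B(0,R)$ is the open Euclidean ball, $|\cdot|$ Lebesgue measure. Kernel assumptions: $g:\mathbb{R}^d\to[0,1]$, $g(x)=\tilde g(\|x\|)$; $g(0)=1$, $g>0$; $g$ is $L$-Lipschitz with continuous first and second derivatives; $\tilde g'(r)<0$ for $r>0$. Fixed-volume $\alpha$-cap process: $A_0\subset\mathbb{R}^d$ compact with $|A_0|=\alpha>0$; for $t\ge1$, $f_t(x)=\int\mathbbm{1}_{A_{t-1}}(y)g(x-y)\,dy$, $C_t=\inf\{C\ge0:|\{x:f_t(x)\ge C\}|<\alpha\}$, $A_t=\{x:f_t(x)\ge C_t\}$. *)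

theory Defs
  imports "HOL-Analysis.Analysis"
begin

definition kernel_conv :: "('a::euclidean_space \<Rightarrow> real) \<Rightarrow> 'a set \<Rightarrow> 'a \<Rightarrow> real" where
  "kernel_conv g A x = (LINT y|lebesgue. indicator A y * g (x - y))"

definition cap_threshold :: "('a::euclidean_space \<Rightarrow> real) \<Rightarrow> real \<Rightarrow> 'a set \<Rightarrow> real" where
  "cap_threshold g \<alpha> A =
     Inf {C. 0 \<le> C \<and> emeasure lebesgue {x. kernel_conv g A x \<ge> C} < ennreal \<alpha>}"

definition cap_step :: "('a::euclidean_space \<Rightarrow> real) \<Rightarrow> real \<Rightarrow> 'a set \<Rightarrow> 'a set" where
  "cap_step g \<alpha> A = {x. kernel_conv g A x \<ge> cap_threshold g \<alpha> A}"

primrec cap_process :: "('a::euclidean_space \<Rightarrow> real) \<Rightarrow> real \<Rightarrow> 'a set \<Rightarrow> nat \<Rightarrow> 'a set" where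
  "cap_process g \<alpha> A0 0 = A0"
| "cap_process g \<alpha> A0 (Suc t) = cap_step g \<alpha> (cap_process g \<alpha> A0 t)"

end

theory Submission
  imports Defs
begin

text \<open>
  Choose \<open>r\<close> with \<open>A\<^sub>0 \<subseteq> cball 0 r\<close> and write \<open>g x = g\<^sub>r(\<parallel>x\<parallel>)\<close> with \<open>g\<^sub>r\<close> decreasing.
  For \<open>x, y \<in> A\<^sub>0\<close> we have \<open>\<parallel>x - y\<parallel> \<le> 2r\<close>, so \<open>f\<^sub>1 \<ge> \<alpha> g\<^sub>r(2r)\<close> on \<open>A\<^sub>0\<close>: the superlevel
  set of every level \<open>C \<le> \<alpha> g\<^sub>r(2r)\<close> contains \<open>A\<^sub>0\<close>, has measure at least \<open>\<alpha>\<close>, and this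
  forces \<open>C\<^sub>1 \<ge> \<alpha> g\<^sub>r(2r)\<close>. For \<open>\<parallel>x\<parallel> > 3r\<close> all distances to \<open>A\<^sub>0\<close> exceed \<open>2r\<close>, so
  \<open>f\<^sub>1(x) \<le> \<alpha> g\<^sub>r(\<parallel>x\<parallel> - r) < \<alpha> g\<^sub>r(2r) \<le> C\<^sub>1\<close> and \<open>x \<notin> A\<^sub>1\<close>.
\<close>

lemma strict_antimono_on_if_deriv_neg:
  fixes f :: "real \<Rightarrow> real"
  assumes "\<And>r. r > 0 \<Longrightarrow> \<exists>D. (f has_real_derivative D) (at r) \<and> D < 0"
  shows "strict_antimono_on {0<..} f"
proof (rule monotone_onI)
  fix a b :: real
  assume a: "a \<in> {0<..}" and "a < b"
  show "f b < f a"
  proof (rule DERIV_neg_imp_decreasing[OF \<open>a < b\<close>])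
    fix x
    assume "a \<le> x"
    with a show "\<exists>D. (f has_real_derivative D) (at x) \<and> D < 0"
      by (intro assms) simp
  qed
qed

lemma radial_profile_antimono:
  fixes g :: "'a::euclidean_space \<Rightarrow> real"
  assumes radial: "\<And>x. g x = gt (norm x)"
    and max_at_0: "\<And>x. g x \<le> g 0"
    and decreasing: "strict_antimono_on {0<..} gt"
  shows "antimono_on {0..} gt"
proof (rule monotone_onI)
  fix a b :: real
  assume ab: "a \<in> {0..}" "b \<in> {0..}" "a \<le> b"
  obtain e :: 'a where e: "norm e = 1"
    using norm_Basis SOME_Basis by blast
  show "gt b \<le> gt a"
  proof (cases "a = 0")
    case True
    then show ?thesis
      using radial[of "b *\<^sub>R e"] radial[of 0] max_at_0[of "b *\<^sub>R e"] ab e by simp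
  next
    case False
    show ?thesis
    proof (cases "a = b")
      case False
      with ab \<open>a \<noteq> 0\<close> have "gt b < gt a"
        using monotone_onD[OF decreasing, of a b] by simp
      then show ?thesis
        by simp
    qed simp
  qed
qed

lemma kernel_conv_integrable:
  fixes g :: "'a::euclidean_space \<Rightarrow> real"
  assumes "compact A" and g: "continuous_on UNIV g"
  shows "integrable lebesgue (\<lambda>y. indicator A y * g (x - y))"
proof -
  have cont: "continuous_on UNIV (\<lambda>y. g (x - y))"
    by (intro continuous_on_compose2[OF g]) (auto intro!: continuous_intros)
  have "integrable lborel (\<lambda>y. indicator A y *\<^sub>R g (x - y))"
    by (rule borel_integrable_compact[OF \<open>compact A\<close> continuous_on_subset[OF cont]]) simp
  moreover have "A \<in> sets lborel"
    using \<open>compact A\<close> by (simp add: borel_compact)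
  moreover have "(\<lambda>y. g (x - y)) \<in> borel_measurable lborel"
    using cont by (simp add: borel_measurable_continuous_onI)
  ultimately show ?thesis
    by (simp add: integrable_completion)
qed

lemma kernel_conv_le:
  fixes g :: "'a::euclidean_space \<Rightarrow> real"
  assumes "compact A" "continuous_on UNIV g" "\<And>y. y \<in> A \<Longrightarrow> g (x - y) \<le> c"
  shows "kernel_conv g A x \<le> c * measure lebesgue A"
proof -
  have "kernel_conv g A x \<le> (LINT y|lebesgue. indicator A y * c)"
    unfolding kernel_conv_def using assms
    by (intro integral_mono kernel_conv_integrable integrable_real_mult_indicator
        lmeasurable_compact) (auto simp: indicator_def)
  then show ?thesis
    by (simp add: mult.commute)
qed

lemma kernel_conv_ge:
  fixes g :: "'a::euclidean_space \<Rightarrow> real"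
  assumes "compact A" "continuous_on UNIV g" "\<And>y. y \<in> A \<Longrightarrow> c \<le> g (x - y)"
  shows "c * measure lebesgue A \<le> kernel_conv g A x"
proof -
  have "(LINT y|lebesgue. indicator A y * c) \<le> kernel_conv g A x"
    unfolding kernel_conv_def using assms
    by (intro integral_mono kernel_conv_integrable integrable_real_mult_indicator
        lmeasurable_compact) (auto simp: indicator_def)
  then show ?thesis
    by (simp add: mult.commute)
qed

lemma kernel_conv_lipschitz:
  fixes g :: "'a::euclidean_space \<Rightarrow> real"
  assumes "compact A" and g: "L-lipschitz_on UNIV g"
  shows "(L * measure lebesgue A)-lipschitz_on UNIV (kernel_conv g A)"
proof -
  have g_cont: "continuous_on UNIV g"
    using g by (rule lipschitz_on_continuous_on)
  have A: "A \<in> lmeasurable"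
    using \<open>compact A\<close> by (rule lmeasurable_compact)
  have int_g: "integrable lebesgue (\<lambda>y. indicator A y * g (x - y))" for x
    using \<open>compact A\<close> g_cont by (rule kernel_conv_integrable)
  have int_const: "integrable lebesgue (\<lambda>y. indicator A y * c)" for c :: real
    using A by (intro integrable_mult_left integrable_real_indicator) (auto simp: fmeasurable_def)
  have one_sided: "kernel_conv g A x \<le> kernel_conv g A x' + L * dist x x' * measure lebesgue A"
    for x x'
  proof -
    have "g (x - y) \<le> g (x' - y) + L * dist x x'" for y
    proof -
      have "g (x - y) - g (x' - y) \<le> dist (g (x - y)) (g (x' - y))"
        by (simp add: dist_real_def)
      also have "\<dots> \<le> L * dist (x - y) (x' - y)"
        by (rule lipschitz_onD[OF g]) auto
      finally show ?thesis
        by (simp add: dist_norm)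
    qed
    then have "kernel_conv g A x \<le>
        (LINT y|lebesgue. indicator A y * g (x' - y) + indicator A y * (L * dist x x'))"
      unfolding kernel_conv_def
      by (intro integral_mono Bochner_Integration.integrable_add int_g int_const)
        (simp add: indicator_def)
    also have "\<dots> = kernel_conv g A x' + L * dist x x' * measure lebesgue A"
      unfolding kernel_conv_def
      by (simp add: Bochner_Integration.integral_add[OF int_g int_const] mult.commute)
    finally show ?thesis .
  qed
  show ?thesis
  proof (rule lipschitz_onI)
    show "dist (kernel_conv g A x) (kernel_conv g A x') \<le> L * measure lebesgue A * dist x x'"
      for x x'
      using one_sided[of x x'] one_sided[of x' x]
      by (simp add: dist_real_def dist_commute abs_le_iff algebra_simps)
    show "0 \<le> L * measure lebesgue A"
      using lipschitz_on_nonneg[OF g] by simp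
  qed
qed

lemma kernel_conv_superlevel_measurable:
  fixes g :: "'a::euclidean_space \<Rightarrow> real"
  assumes "compact A" "L-lipschitz_on UNIV g"
  shows "{x. C \<le> kernel_conv g A x} \<in> sets lebesgue"
proof -
  have "continuous_on UNIV (kernel_conv g A)"
    using kernel_conv_lipschitz[OF assms] by (rule lipschitz_on_continuous_on)
  then have "closed {x. C \<le> kernel_conv g A x}"
    by (intro closed_Collect_le continuous_on_const)
  then show ?thesis
    by simp
qed

lemma cap_threshold_ge:
  fixes g :: "'a::euclidean_space \<Rightarrow> real"
  assumes measurable: "\<And>C. {x. C \<le> kernel_conv g A x} \<in> sets lebesgue"
    and bounded: "\<And>x. kernel_conv g A x \<le> B"
    and "\<alpha> > 0"
    and A_vol: "ennreal \<alpha> \<le> emeasure lebesgue A"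
    and A_superlevel: "A \<subseteq> {x. C \<le> kernel_conv g A x}"
  shows "C \<le> cap_threshold g \<alpha> A"
proof -
  define S where "S = {C. 0 \<le> C \<and> emeasure lebesgue {x. C \<le> kernel_conv g A x} < ennreal \<alpha>}"
  define C\<^sub>0 where "C\<^sub>0 = max 0 (B + 1)"
  have "kernel_conv g A x < C\<^sub>0" for x
    using bounded[of x] by (simp add: C\<^sub>0_def)
  then have "{x. C\<^sub>0 \<le> kernel_conv g A x} = {}"
    by (simp add: not_le)
  moreover have "0 \<le> C\<^sub>0"
    by (simp add: C\<^sub>0_def)
  ultimately have "C\<^sub>0 \<in> S"
    using \<open>\<alpha> > 0\<close> by (simp add: S_def)
  then have "S \<noteq> {}"
    by blast
  moreover have "C \<le> C'" if "C' \<in> S" for C'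
  proof (rule ccontr)
    assume "\<not> C \<le> C'"
    then have "A \<subseteq> {x. C' \<le> kernel_conv g A x}"
      using A_superlevel by auto
    then have "ennreal \<alpha> \<le> emeasure lebesgue {x. C' \<le> kernel_conv g A x}"
      using A_vol emeasure_mono[OF _ measurable] by (blast intro: order_trans)
    then show False
      using \<open>C' \<in> S\<close> by (simp add: S_def not_less[symmetric])
  qed
  ultimately show ?thesis
    unfolding cap_threshold_def S_def[symmetric] by (rule cInf_greatest)
qed

lemma kernel_conv_ge_radial:
  fixes g :: "'a::euclidean_space \<Rightarrow> real"
  assumes "compact A" "continuous_on UNIV g"
    and radial: "\<And>x. g x = gt (norm x)" and antimono: "antimono_on {0..} gt"
    and "A \<subseteq> cball 0 r" "norm x \<le> r"
  shows "gt (2 * r) * measure lebesgue A \<le> kernel_conv g A x"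
proof (rule kernel_conv_ge[OF \<open>compact A\<close> \<open>continuous_on UNIV g\<close>])
  fix y
  assume "y \<in> A"
  then have "norm (x - y) \<le> 2 * r"
    using norm_triangle_ineq4[of x y] \<open>A \<subseteq> cball 0 r\<close> \<open>norm x \<le> r\<close> by auto
  then show "gt (2 * r) \<le> g (x - y)"
    using monotone_onD[OF antimono] radial by simp
qed

lemma kernel_conv_le_radial:
  fixes g :: "'a::euclidean_space \<Rightarrow> real"
  assumes "compact A" "continuous_on UNIV g"
    and radial: "\<And>x. g x = gt (norm x)" and antimono: "antimono_on {0..} gt"
    and "A \<subseteq> cball 0 r" "r \<le> norm x"
  shows "kernel_conv g A x \<le> gt (norm x - r) * measure lebesgue A"
proof (rule kernel_conv_le[OF \<open>compact A\<close> \<open>continuous_on UNIV g\<close>])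
  fix y
  assume "y \<in> A"
  then have "norm x - r \<le> norm (x - y)"
    using norm_triangle_ineq2[of x y] \<open>A \<subseteq> cball 0 r\<close> by auto
  then show "g (x - y) \<le> gt (norm x - r)"
    using monotone_onD[OF antimono] radial \<open>r \<le> norm x\<close> by simp
qed

theorem lemma7:
  fixes g :: "'a::euclidean_space \<Rightarrow> real" and gt :: "real \<Rightarrow> real"
    and L \<alpha> :: real and A0 :: "'a set"
  assumes g_range: "\<And>x. 0 \<le> g x \<and> g x \<le> 1"
    and g_radial: "\<And>x. g x = gt (norm x)"
    and g_zero: "g 0 = 1"
    and g_pos: "\<And>x. g x > 0"
    and g_lip: "L-lipschitz_on UNIV g"
    and g_C2: "\<exists>Dg :: 'a \<Rightarrow> ('a \<Rightarrow>\<^sub>L real). \<exists>D2g :: 'a \<Rightarrow> ('a \<Rightarrow>\<^sub>L ('a \<Rightarrow>\<^sub>L real)).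
                 (\<forall>x. (g has_derivative blinfun_apply (Dg x)) (at x)) \<and> continuous_on UNIV Dg \<and>
                 (\<forall>x. (Dg has_derivative blinfun_apply (D2g x)) (at x)) \<and> continuous_on UNIV D2g"
    and gt_decr: "\<And>r. r > 0 \<Longrightarrow> \<exists>D. (gt has_real_derivative D) (at r) \<and> D < 0"
    and A0_compact: "compact A0"
    and A0_vol: "measure lebesgue A0 = \<alpha>"
    and \<alpha>_pos: "\<alpha> > 0"
  shows "\<exists>R>0. cap_process g \<alpha> A0 1 \<subseteq> ball 0 R"
proof -
  have g_cont: "continuous_on UNIV g"
    using g_lip by (rule lipschitz_on_continuous_on)
  have gt_strict: "strict_antimono_on {0<..} gt"
    using gt_decr by (rule strict_antimono_on_if_deriv_neg)
  have gt_anti: "antimono_on {0..} gt"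
    using g_radial _ gt_strict by (rule radial_profile_antimono) (simp add: g_range g_zero)
  obtain r where "r > 0" and A0_ball: "A0 \<subseteq> cball 0 r"
    using compact_imp_bounded[OF A0_compact] by (auto simp: bounded_pos subset_iff)
  have "gt (2 * r) * \<alpha> \<le> cap_threshold g \<alpha> A0"
  proof (rule cap_threshold_ge)
    show "kernel_conv g A0 x \<le> \<alpha>" for x
      using kernel_conv_le[OF A0_compact g_cont, of x 1] g_range A0_vol by simp
    show "ennreal \<alpha> \<le> emeasure lebesgue A0"
      using A0_compact A0_vol by (simp add: emeasure_eq_measure2 lmeasurable_compact)
    show "A0 \<subseteq> {x. gt (2 * r) * \<alpha> \<le> kernel_conv g A0 x}"
      using kernel_conv_ge_radial[OF A0_compact g_cont g_radial gt_anti A0_ball] A0_ball A0_vol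
      by auto
  qed (use kernel_conv_superlevel_measurable[OF A0_compact g_lip] \<alpha>_pos in auto)
  moreover have "kernel_conv g A0 x < gt (2 * r) * \<alpha>" if "norm x \<ge> 3 * r + 1" for x
  proof -
    have "kernel_conv g A0 x \<le> gt (norm x - r) * \<alpha>"
      using kernel_conv_le_radial[OF A0_compact g_cont g_radial gt_anti A0_ball] that \<open>r > 0\<close>
        A0_vol by simp
    also have "\<dots> < gt (2 * r) * \<alpha>"
      using monotone_onD[OF gt_strict, of "2 * r" "norm x - r"] that \<open>r > 0\<close> \<alpha>_pos by simp
    finally show ?thesis .
  qed
  ultimately have "cap_process g \<alpha> A0 1 \<subseteq> ball 0 (3 * r + 1)"
    by (force simp: cap_step_def not_less[symmetric])
  then show ?thesis
    using \<open>r > 0\<close> by (intro exI[of _ "3 * r + 1"]) simp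
qed

end
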